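(* Let $H'=\begin{bmatrix}0\\1\\0\end{bmatrix}$, $V'=\begin{bmatrix}0&1&0\end{bmatrix}$, $\mathcal{C}'=Av_{\mathfrak{P}}(H',V')$, and for $n\ge1$ let $c'_n$ be the number of polyominoes in $\mathcal{C}'$ whose minimal bounding rectangle is an $n\times n$ square. Then $c'_n\ge\lfloor n/2\rfloor!$ for all $n\ge1$.
   Context: A polyomino is a finite union of unit cells of $\mathbb{Z}\times\mathbb{Z}$ that is connected via edge adjacency, considered up to translation, identified with the binary matrix of its minimal bounding rectangle (entry $1$ iff the corresponding unit square is a cell). A matrix is a submatrix of another if obtained by deleting rows and/or columns; $Av_{\mathfrak{P}}(\mathcal{M})$ is the set of polyominoes with no submatrix in $\mathcal{M}$. *)

theory Defs
  imports Main
begin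

text \<open>A polyomino is represented by its canonical translate: a finite nonempty set of
cells (row, column) in nat \<times> nat, edge-connected, whose minimal bounding rectangle
has its top-left corner at (0,0). Its binary matrix has entry (i,j) = 1 iff (i,j) is a cell.\<close>

type_synonym cell = "nat \<times> nat"

definition adjacent :: "cell \<Rightarrow> cell \<Rightarrow> bool" where
  "adjacent a b \<longleftrightarrow>
     (fst a = fst b \<and> (snd a = Suc (snd b) \<or> snd b = Suc (snd a))) \<or>
     (snd a = snd b \<and> (fst a = Suc (fst b) \<or> fst b = Suc (fst a)))"

definition is_polyomino :: "cell set \<Rightarrow> bool" where
  "is_polyomino P \<longleftrightarrow> finite P \<and> P \<noteq> {} \<and>
     (\<exists>c\<in>P. fst c = 0) \<and> (\<exists>c\<in>P. snd c = 0) \<and>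
     (\<forall>a\<in>P. \<forall>b\<in>P. (\<lambda>x y. x \<in> P \<and> y \<in> P \<and> adjacent x y)\<^sup>*\<^sup>* a b)"

definition poly_height :: "cell set \<Rightarrow> nat" where
  "poly_height P = Suc (Max (fst ` P))"

definition poly_width :: "cell set \<Rightarrow> nat" where
  "poly_width P = Suc (Max (snd ` P))"

text \<open>A binary matrix: (number of rows, number of columns, entries).\<close>
type_synonym bmatrix = "nat \<times> nat \<times> (nat \<Rightarrow> nat \<Rightarrow> bool)"

definition contains_pattern :: "cell set \<Rightarrow> bmatrix \<Rightarrow> bool" where
  "contains_pattern P M = (case M of (k, l, m) \<Rightarrow>
     (\<exists>r c. strict_mono_on {..<k} r \<and> strict_mono_on {..<l} c \<and>
        (\<forall>i<k. r i < poly_height P) \<and> (\<forall>j<l. c j < poly_width P) \<and>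
        (\<forall>i<k. \<forall>j<l. m i j \<longleftrightarrow> (r i, c j) \<in> P)))"

definition Av_P :: "bmatrix set \<Rightarrow> cell set set" where
  "Av_P Ms = {P. is_polyomino P \<and> (\<forall>M\<in>Ms. \<not> contains_pattern P M)}"

definition H' :: bmatrix where
  "H' = (3, 1, \<lambda>i j. i = 1)"

definition V' :: bmatrix where
  "V' = (1, 3, \<lambda>i j. j = 1)"

definition c' :: "nat \<Rightarrow> nat" where
  "c' n = card {P \<in> Av_P {H', V'}. poly_height P = n \<and> poly_width P = n}"

end

theory Submission
  imports Defs "HOL-Combinatorics.Permutations"
begin

text \<open>For a permutation \<sigma> of {0, ..., m - 1}, where m = n div 2, take the full n \<times> n square
and delete, in each odd row 2k + 1, the single cell in column 2 \<sigma>(k) + 1. Column 0 and the even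
rows stay intact, so the result is connected. Both H' and V' require two missing cells in one
column (resp. row) of the bounding rectangle, whereas here every row and, as \<sigma> is injective,
every column misses at most one cell. Distinct permutations delete distinct cells, which gives
m! distinct polyominoes.\<close>

abbreviation cell_graph :: "cell set \<Rightarrow> cell \<Rightarrow> cell \<Rightarrow> bool" where
  "cell_graph P \<equiv> \<lambda>x y. x \<in> P \<and> y \<in> P \<and> adjacent x y"

lemma is_polyominoI_origin:
  assumes "finite P" "(0, 0) \<in> P" "\<And>a. a \<in> P \<Longrightarrow> (cell_graph P)\<^sup>*\<^sup>* a (0, 0)"
  shows "is_polyomino P"
proof -
  have "symp (cell_graph P)"
    by (auto simp: symp_def adjacent_def)
  then have from_origin: "(cell_graph P)\<^sup>*\<^sup>* (0, 0) b" if "b \<in> P" for b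
    using assms(3)[OF that] by (blast dest: sympD[OF symp_rtranclp])
  have "\<forall>a\<in>P. \<forall>b\<in>P. (cell_graph P)\<^sup>*\<^sup>* a b"
    using assms(3) from_origin by (blast intro: rtranclp_trans)
  with assms(1,2) show ?thesis
    unfolding is_polyomino_def by (auto intro!: bexI[of _ "(0, 0)"])
qed

lemma row_path_to_column_0:
  assumes "\<And>j'. j' \<le> j \<Longrightarrow> (i, j') \<in> P"
  shows "(cell_graph P)\<^sup>*\<^sup>* (i, j) (i, 0)"
  using assms
proof (induction j)
  case (Suc j)
  have "cell_graph P (i, Suc j) (i, j)"
    using Suc.prems by (auto simp: adjacent_def)
  moreover have "(cell_graph P)\<^sup>*\<^sup>* (i, j) (i, 0)"
    using Suc by simp
  ultimately show ?case
    by (rule converse_rtranclp_into_rtranclp)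
qed simp

lemma column_path_to_row_0:
  assumes "\<And>i'. i' \<le> i \<Longrightarrow> (i', j) \<in> P"
  shows "(cell_graph P)\<^sup>*\<^sup>* (i, j) (0, j)"
  using assms
proof (induction i)
  case (Suc i)
  have "cell_graph P (Suc i, j) (i, j)"
    using Suc.prems by (auto simp: adjacent_def)
  moreover have "(cell_graph P)\<^sup>*\<^sup>* (i, j) (0, j)"
    using Suc by simp
  ultimately show ?case
    by (rule converse_rtranclp_into_rtranclp)
qed simp

lemma poly_height_eqI:
  assumes "finite P" "\<And>a. a \<in> P \<Longrightarrow> fst a < h" "(h - 1, j) \<in> P"
  shows "poly_height P = h"
proof -
  have "Max (fst ` P) = h - 1"
    using assms by (intro Max_eqI) (force intro: rev_image_eqI)+
  moreover have "h > 0"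
    using assms(2,3) by fastforce
  ultimately show ?thesis
    by (simp add: poly_height_def)
qed

lemma poly_width_eqI:
  assumes "finite P" "\<And>a. a \<in> P \<Longrightarrow> snd a < w" "(i, w - 1) \<in> P"
  shows "poly_width P = w"
proof -
  have "Max (snd ` P) = w - 1"
    using assms by (intro Max_eqI) (force intro: rev_image_eqI)+
  moreover have "w > 0"
    using assms(2,3) by fastforce
  ultimately show ?thesis
    by (simp add: poly_width_def)
qed

lemma subset_bounding_rectangle:
  assumes "finite P"
  shows "P \<subseteq> {..<poly_height P} \<times> {..<poly_width P}"
proof
  fix a assume "a \<in> P"
  with assms have "fst a \<le> Max (fst ` P)" "snd a \<le> Max (snd ` P)"
    by auto
  then show "a \<in> {..<poly_height P} \<times> {..<poly_width P}"
    by (auto simp: poly_height_def poly_width_def mem_Times_iff)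
qed

lemma finite_polyominoes_with_bounding_rectangle:
  "finite {P. is_polyomino P \<and> poly_height P = h \<and> poly_width P = w}"
proof (rule finite_subset)
  show "{P. is_polyomino P \<and> poly_height P = h \<and> poly_width P = w}
      \<subseteq> Pow ({..<h} \<times> {..<w})"
    using subset_bounding_rectangle by (fastforce simp: is_polyomino_def)
qed simp

lemma not_contains_H'I:
  assumes "\<And>i i' j. (i, j) \<notin> P \<Longrightarrow> (i', j) \<notin> P \<Longrightarrow>
      i < poly_height P \<Longrightarrow> i' < poly_height P \<Longrightarrow> j < poly_width P \<Longrightarrow> i = i'"
  shows "\<not> contains_pattern P H'"
proof
  assume "contains_pattern P H'"
  then obtain r c where r: "strict_mono_on {..<3::nat} r" "\<forall>i<3. r i < poly_height P"
    and c: "c 0 < poly_width P" and m: "\<forall>i<3. i = 1 \<longleftrightarrow> (r i, c 0) \<in> P"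
    unfolding contains_pattern_def H'_def by auto
  have holes: "(r 0, c 0) \<notin> P" "(r 2, c 0) \<notin> P"
    using m[rule_format, of 0] m[rule_format, of 2] by auto
  have "r 0 < r 2"
    using r(1) by (auto simp: strict_mono_on_def)
  moreover have "r 0 = r 2"
    using assms[OF holes] r(2) c by simp
  ultimately show False
    by simp
qed

lemma not_contains_V'I:
  assumes "\<And>i j j'. (i, j) \<notin> P \<Longrightarrow> (i, j') \<notin> P \<Longrightarrow>
      i < poly_height P \<Longrightarrow> j < poly_width P \<Longrightarrow> j' < poly_width P \<Longrightarrow> j = j'"
  shows "\<not> contains_pattern P V'"
proof
  assume "contains_pattern P V'"
  then obtain r c where c: "strict_mono_on {..<3::nat} c" "\<forall>j<3. c j < poly_width P"
    and r: "r 0 < poly_height P" and m: "\<forall>j<3. j = 1 \<longleftrightarrow> (r 0, c j) \<in> P"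
    unfolding contains_pattern_def V'_def by auto
  have holes: "(r 0, c 0) \<notin> P" "(r 0, c 2) \<notin> P"
    using m[rule_format, of 0] m[rule_format, of 2] by auto
  have "c 0 < c 2"
    using c(1) by (auto simp: strict_mono_on_def)
  moreover have "c 0 = c 2"
    using assms[OF holes] c(2) r by simp
  ultimately show False
    by simp
qed

definition perm_square :: "nat \<Rightarrow> (nat \<Rightarrow> nat) \<Rightarrow> cell set" where
  "perm_square n \<sigma> = {(i, j). i < n \<and> j < n \<and> \<not> (odd i \<and> j = 2 * \<sigma> (i div 2) + 1)}"

lemma mem_perm_square [simp]:
  "(i, j) \<in> perm_square n \<sigma> \<longleftrightarrow> i < n \<and> j < n \<and> \<not> (odd i \<and> j = 2 * \<sigma> (i div 2) + 1)"
  by (simp add: perm_square_def)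

lemma finite_perm_square: "finite (perm_square n \<sigma>)"
  by (rule finite_subset[of _ "{..<n} \<times> {..<n}"]) (auto simp: perm_square_def)

lemma is_polyomino_perm_square:
  assumes "n \<ge> 1"
  shows "is_polyomino (perm_square n \<sigma>)"
proof (rule is_polyominoI_origin[OF finite_perm_square])
  let ?P = "perm_square n \<sigma>"
  show "(0, 0) \<in> ?P"
    using assms by simp
  have from_even_row: "(cell_graph ?P)\<^sup>*\<^sup>* (k, j) (0, 0)" if "even k" "k < n" "j < n" for k j
    using row_path_to_column_0[of j k ?P] column_path_to_row_0[of k 0 ?P] that
    by (force intro: rtranclp_trans)
  fix a assume a: "a \<in> ?P"
  then obtain i j where ij: "a = (i, j)" "i < n" "j < n"
    by (cases a) auto
  show "(cell_graph ?P)\<^sup>*\<^sup>* a (0, 0)"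
  proof (cases "even i")
    case False
    then obtain k where k: "i = Suc k" "even k"
      by (cases i) auto
    then have "cell_graph ?P a (k, j)"
      using a ij by (auto simp: adjacent_def)
    moreover have "(cell_graph ?P)\<^sup>*\<^sup>* (k, j) (0, 0)"
      using from_even_row k ij by simp
    ultimately show ?thesis
      by (rule converse_rtranclp_into_rtranclp)
  qed (use ij from_even_row in simp)
qed

lemma bounding_rectangle_perm_square:
  assumes "n \<ge> 1"
  shows "poly_height (perm_square n \<sigma>) = n" "poly_width (perm_square n \<sigma>) = n"
  using assms
  by (auto intro!: poly_height_eqI[where j = 0] poly_width_eqI[where i = 0] finite_perm_square)

lemma perm_square_in_Av_P:
  assumes "n \<ge> 1" "inj_on \<sigma> {..<n div 2}"
  shows "perm_square n \<sigma> \<in> Av_P {H', V'}"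
proof -
  have "i = i'" if "odd i" "odd i'" "i < n" "i' < n" "\<sigma> (i div 2) = \<sigma> (i' div 2)" for i i'
  proof -
    have "i div 2 < n div 2" "i' div 2 < n div 2"
      using that by (auto elim!: oddE)
    then have "i div 2 = i' div 2"
      using assms(2) that(5) by (auto dest: inj_onD)
    with that(1,2) show ?thesis
      by (metis odd_two_times_div_two_succ)
  qed
  then show ?thesis
    using assms is_polyomino_perm_square
    by (auto simp: Av_P_def bounding_rectangle_perm_square
        intro!: not_contains_H'I not_contains_V'I)
qed

lemma inj_on_perm_square: "inj_on (perm_square n) {\<sigma>. \<sigma> permutes {..<n div 2}}"
proof (rule inj_onI, rule ext)
  fix \<sigma> \<tau> k
  assume \<sigma>: "\<sigma> \<in> {\<sigma>. \<sigma> permutes {..<n div 2}}" and \<tau>: "\<tau> \<in> {\<sigma>. \<sigma> permutes {..<n div 2}}"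
    and eq: "perm_square n \<sigma> = perm_square n \<tau>"
  show "\<sigma> k = \<tau> k"
  proof (cases "k < n div 2")
    case True
    then have "\<sigma> k < n div 2"
      using \<sigma> by (metis lessThan_iff mem_Collect_eq permutes_in_image)
    then have "(2 * k + 1, 2 * \<sigma> k + 1) \<notin> perm_square n \<tau>" "2 * k + 1 < n" "2 * \<sigma> k + 1 < n"
      using True eq[symmetric] by auto
    then show ?thesis
      by simp
  qed (use \<sigma> \<tau> in \<open>metis lessThan_iff mem_Collect_eq permutes_not_in\<close>)
qed

theorem proposition19:
  fixes n :: nat
  assumes "n \<ge> 1"
  shows "fact (n div 2) \<le> c' n"
proof -
  let ?perms = "{\<sigma>. \<sigma> permutes {..<n div 2}}"
  let ?C = "{P \<in> Av_P {H', V'}. poly_height P = n \<and> poly_width P = n}"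
  have "finite ?C"
    using finite_polyominoes_with_bounding_rectangle[of n n]
    by (rule finite_subset[rotated]) (auto simp: Av_P_def)
  moreover have "perm_square n ` ?perms \<subseteq> ?C"
    using assms by (auto intro!: perm_square_in_Av_P bounding_rectangle_perm_square
        dest: permutes_inj_on)
  ultimately have "card (perm_square n ` ?perms) \<le> c' n"
    unfolding c'_def by (rule card_mono)
  moreover have "card (perm_square n ` ?perms) = fact (n div 2)"
    using inj_on_perm_square by (simp add: card_image card_permutations)
  ultimately show ?thesis
    by simp
qed

end
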